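(* Let $p$ be a prime and $n\ge1$, and let $A,B,Q\in\mathbb{L}_p^{n\times n}$ with $\det(Q)\neq0$ and $AQ=QB$. Then the linear cellular automaton over $(\mathbb{Z}/p\mathbb{Z})^n$ with associated matrix $A$ is positively expansive if and only if the linear cellular automaton over $(\mathbb{Z}/p\mathbb{Z})^n$ with associated matrix $B$ is positively expansive.
   Context: $\mathbb{L}_p=\mathbb{Z}/p\mathbb{Z}[X,X^{-1}]$. The linear cellular automaton over $(\mathbb{Z}/p\mathbb{Z})^n$ with associated matrix $\sum_{j=-r}^rA_jX^{-j}$ ($A_j\in(\mathbb{Z}/p\mathbb{Z})^{n\times n}$) is the map $\mathcal{F}$ on $((\mathbb{Z}/p\mathbb{Z})^n)^{\mathbb{Z}}$ with $\mathcal{F}(c)_i=\sum_{j=-r}^rA_jc_{i+j}$. The configuration space carries the metric $d(c,c')=2^{-\min\{|j|:c_j\neq c'_j\}}$ ($d(c,c)=0$). $\mathcal{F}$ is positively expansive if there is $\varepsilon>0$ such that for all configurations $c\neq c'$ there is $\ell\in\mathbb{N}$ with $d(\mathcal{F}^\ell(c),\mathcal{F}^\ell(c'))\geq\varepsilon$. *)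

theory Defs
  imports "HOL-Analysis.Analysis" "HOL-Computational_Algebra.Formal_Laurent_Series"
    "Berlekamp_Zassenhaus.Finite_Field"
begin

text \<open>Z/pZ is the type 'p mod_ring with 'p of class prime_card (CARD('p) = p prime).
  L_p = Z/pZ[X,X^-1] is represented by Laurent series over Z/pZ with finite support;
  an n x n matrix over L_p is an element of ('p mod_ring fls)^'n^'n all of whose entries
  are Laurent polynomials.\<close>

definition laurent_poly :: "'a::zero fls \<Rightarrow> bool" where
  "laurent_poly f \<longleftrightarrow> finite {k. fls_nth f k \<noteq> 0}"

definition laurent_mat :: "'a::zero fls ^'n ^'m \<Rightarrow> bool" where
  "laurent_mat M \<longleftrightarrow> (\<forall>a b. laurent_poly (M $ a $ b))"

definition mat_support :: "'a::zero fls ^'n ^'m \<Rightarrow> int set" where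
  "mat_support M = {k. \<exists>a b. fls_nth (M $ a $ b) k \<noteq> 0}"

definition coeff_mat :: "'a::zero fls ^'n ^'m \<Rightarrow> int \<Rightarrow> 'a ^'n ^'m" where
  "coeff_mat M k = (\<chi> a b. fls_nth (M $ a $ b) k)"

text \<open>Linear CA with associated matrix M = sum_j A_j X^(-j):
  F(c)_i = sum_j A_j c_(i+j) = sum_k (coeff of X^k) c_(i-k).\<close>
definition lca :: "'a::comm_ring_1 fls ^'n ^'n \<Rightarrow> (int \<Rightarrow> 'a ^'n) \<Rightarrow> (int \<Rightarrow> 'a ^'n)" where
  "lca M c = (\<lambda>i. \<Sum>k\<in>mat_support M. coeff_mat M k *v c (i - k))"

definition cdist :: "(int \<Rightarrow> 'b) \<Rightarrow> (int \<Rightarrow> 'b) \<Rightarrow> real" where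
  "cdist c c' = (if c = c' then 0
     else (1/2) ^ (LEAST m::nat. \<exists>j. nat \<bar>j\<bar> = m \<and> c j \<noteq> c' j))"

definition pos_expansive :: "((int \<Rightarrow> 'b) \<Rightarrow> (int \<Rightarrow> 'b)) \<Rightarrow> bool" where
  "pos_expansive F \<longleftrightarrow> (\<exists>\<epsilon>>0. \<forall>c c'. c \<noteq> c' \<longrightarrow>
     (\<exists>l::nat. cdist ((F ^^ l) c) ((F ^^ l) c') \<ge> \<epsilon>))"

end

theory Submission
  imports Defs "HOL-Library.Function_Algebras"
begin

(* Since the automata are additive, positive expansiveness of lca M means: there is a window
   [-r, r] in which the orbit of every nonzero configuration is eventually nonzero.
   M \<mapsto> lca M is multiplicative, so AQ = QB gives lca A \<circ> lca Q = lca Q \<circ> lca B. The map lca Q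
   moves supports by a bounded amount, and its kernel lies in that of multiplication by the
   nonzero Laurent polynomial det Q, whose elements satisfy a two-sided linear recurrence and
   hence vanish once they vanish on a large enough window. This transfers the window property
   from A to B; for the converse, the adjugate R of Q satisfies BR = RA and QR = det Q. *)

section \<open>Laurent polynomials and Laurent matrices\<close>

lemma fls_nth_mult_eq_sum:
  fixes f g :: "'a::comm_ring_1 fls"
  assumes S: "finite S" and supp: "\<And>k. fls_nth f k \<noteq> 0 \<Longrightarrow> k \<in> S"
  shows "fls_nth (f * g) t = (\<Sum>k\<in>S. fls_nth f k * fls_nth g (t - k))"
proof -
  define I where "I = {fls_subdegree f..t - fls_subdegree g}"
  have "fls_nth (f * g) t = (\<Sum>k\<in>I. fls_nth f k * fls_nth g (t - k))"
    unfolding I_def by (rule fls_times_nth(2))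
  also have "\<dots> = (\<Sum>k\<in>S \<inter> I. fls_nth f k * fls_nth g (t - k))"
    by (rule sum.mono_neutral_right) (auto simp: I_def, metis mult_zero_left supp)
  also have "\<dots> = (\<Sum>k\<in>S. fls_nth f k * fls_nth g (t - k))"
  proof (rule sum.mono_neutral_left)
    show "\<forall>k\<in>S - S \<inter> I. fls_nth f k * fls_nth g (t - k) = 0"
    proof
      fix k assume "k \<in> S - S \<inter> I"
      then have "k < fls_subdegree f \<or> t - k < fls_subdegree g" by (auto simp: I_def)
      then show "fls_nth f k * fls_nth g (t - k) = 0" by auto
    qed
  qed (use S in auto)
  finally show ?thesis .
qed

lemma laurent_poly_0: "laurent_poly 0"
  unfolding laurent_poly_def by simp

lemma laurent_poly_of_int: "laurent_poly (of_int z :: 'a::comm_ring_1 fls)"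
  unfolding laurent_poly_def by (rule finite_subset[of _ "{0}"]) (auto simp: fls_of_int_nth)

lemma laurent_poly_add: "laurent_poly f \<Longrightarrow> laurent_poly g \<Longrightarrow> laurent_poly (f + g)"
  unfolding laurent_poly_def
  by (rule finite_subset[of _ "{k. fls_nth f k \<noteq> 0} \<union> {k. fls_nth g k \<noteq> 0}"]) auto

lemma laurent_poly_mult:
  fixes f g :: "'a::comm_ring_1 fls"
  assumes "laurent_poly f" and "laurent_poly g"
  shows "laurent_poly (f * g)"
proof -
  let ?S = "{k. fls_nth f k \<noteq> 0}" and ?T = "{k. fls_nth g k \<noteq> 0}"
  have fin: "finite ?S" "finite ?T" using assms by (auto simp: laurent_poly_def)
  have "{t. fls_nth (f * g) t \<noteq> 0} \<subseteq> (\<lambda>(s, u). s + u) ` (?S \<times> ?T)"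
  proof
    fix t assume "t \<in> {t. fls_nth (f * g) t \<noteq> 0}"
    then have "(\<Sum>k\<in>?S. fls_nth f k * fls_nth g (t - k)) \<noteq> 0"
      using fls_nth_mult_eq_sum[OF fin(1), of f g t] by auto
    then obtain k where "k \<in> ?S" "fls_nth f k * fls_nth g (t - k) \<noteq> 0"
      by (meson sum.neutral)
    then have "(k, t - k) \<in> ?S \<times> ?T" by auto
    then show "t \<in> (\<lambda>(s, u). s + u) ` (?S \<times> ?T)" by force
  qed
  then show ?thesis
    unfolding laurent_poly_def by (rule finite_subset) (use fin in auto)
qed

lemma laurent_poly_sum:
  "(\<And>x. x \<in> A \<Longrightarrow> laurent_poly (f x)) \<Longrightarrow> laurent_poly (\<Sum>x\<in>A. f x)"
  by (induction A rule: infinite_finite_induct) (auto simp: laurent_poly_0 laurent_poly_add)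

lemma laurent_poly_prod:
  fixes f :: "_ \<Rightarrow> 'a::comm_ring_1 fls"
  shows "(\<And>x. x \<in> A \<Longrightarrow> laurent_poly (f x)) \<Longrightarrow> laurent_poly (\<Prod>x\<in>A. f x)"
  using laurent_poly_of_int[of 1]
  by (induction A rule: infinite_finite_induct) (auto simp: laurent_poly_mult)

lemma laurent_poly_det:
  fixes M :: "'a::comm_ring_1 fls^'n^'n"
  assumes "laurent_mat M"
  shows "laurent_poly (det M)"
  using assms unfolding det_def laurent_mat_def
  by (auto intro!: laurent_poly_sum laurent_poly_mult laurent_poly_of_int laurent_poly_prod)

lemma laurent_mat_mult:
  fixes M :: "'a::comm_ring_1 fls^'k^'m" and N :: "'a fls^'n^'k"
  shows "laurent_mat M \<Longrightarrow> laurent_mat N \<Longrightarrow> laurent_mat (M ** N)"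
  unfolding laurent_mat_def matrix_matrix_mult_def
  by (auto intro!: laurent_poly_sum laurent_poly_mult)

lemma laurent_mat_iff_finite_mat_support:
  "laurent_mat (M :: 'a::zero fls^'n^'m) \<longleftrightarrow> finite (mat_support M)"
proof -
  have "mat_support M = (\<Union>a b. {k. fls_nth (M $ a $ b) k \<noteq> 0})"
    by (auto simp: mat_support_def)
  then show ?thesis
    unfolding laurent_mat_def laurent_poly_def by auto
qed

lemma laurent_mat_scalar_iff: "laurent_mat (mat d :: 'a::zero fls^'n^'n) \<longleftrightarrow> laurent_poly d"
proof
  assume "laurent_mat (mat d :: 'a fls^'n^'n)"
  then have "laurent_poly ((mat d :: 'a fls^'n^'n) $ a $ a)" for a
    unfolding laurent_mat_def by blast
  then show "laurent_poly d" by (simp add: mat_def)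
qed (simp add: laurent_mat_def mat_def laurent_poly_0)

lemma finite_int_set_subset_interval:
  assumes "finite (S :: int set)"
  shows "\<exists>K::nat. S \<subseteq> {-int K..int K}"
proof -
  obtain K :: nat where "\<forall>k\<in>S. \<bar>k\<bar> \<le> int K"
    using assms by (meson infinite_int_iff_unbounded_le linorder_le_cases nat_le_iff nat_mono)
  then have "S \<subseteq> {-int K..int K}" by (auto simp: abs_le_iff)
  then show ?thesis ..
qed

section \<open>The automaton of a Laurent matrix\<close>

lemma sum_matrix_vector_mult:
  "(\<Sum>a\<in>S. f a) *v x = (\<Sum>a\<in>S. f a *v (x :: 'a::semiring_1^'n))"
  by (induction S rule: infinite_finite_induct) (simp_all add: matrix_vector_mult_add_rdistrib)

lemma matrix_vector_mult_sum:
  "A *v (\<Sum>a\<in>S. g a) = (\<Sum>a\<in>S. A *v (g a :: 'a::semiring_1^'n))"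
  by (induction S rule: infinite_finite_induct) (simp_all add: matrix_vector_right_distrib)

lemma coeff_mat_eq_0: "k \<notin> mat_support M \<Longrightarrow> coeff_mat M k = 0"
  by (auto simp: mat_support_def coeff_mat_def vec_eq_iff)

lemma coeff_mat_mult:
  fixes M :: "'a::comm_ring_1 fls^'k^'m" and N :: "'a fls^'n^'k"
  assumes "finite S" and "mat_support M \<subseteq> S"
  shows "coeff_mat (M ** N) t = (\<Sum>k\<in>S. coeff_mat M k ** coeff_mat N (t - k))"
proof -
  have "fls_nth ((M ** N) $ a $ e) t =
      (\<Sum>k\<in>S. \<Sum>b\<in>UNIV. fls_nth (M $ a $ b) k * fls_nth (N $ b $ e) (t - k))" for a e
  proof -
    have "fls_nth ((M ** N) $ a $ e) t =
        (\<Sum>b\<in>UNIV. \<Sum>k\<in>S. fls_nth (M $ a $ b) k * fls_nth (N $ b $ e) (t - k))"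
      unfolding matrix_matrix_mult_def vec_lambda_beta fls_nth_sum
      using assms by (intro sum.cong refl fls_nth_mult_eq_sum) (auto simp: mat_support_def)
    then show ?thesis by (simp add: sum.swap[of _ UNIV])
  qed
  then show ?thesis
    by (simp add: vec_eq_iff coeff_mat_def matrix_matrix_mult_def sum_component)
qed

lemma lca_eq_sum:
  assumes "finite S" and "mat_support M \<subseteq> S"
  shows "lca M c i = (\<Sum>k\<in>S. coeff_mat M k *v c (i - k))"
  unfolding lca_def using assms by (intro sum.mono_neutral_left) (auto simp: coeff_mat_eq_0)

lemma lca_mult:
  fixes M N :: "'a::comm_ring_1 fls^'n^'n"
  assumes "laurent_mat M" and "laurent_mat N"
  shows "lca (M ** N) c = lca M (lca N c)"
proof
  fix i
  define S T where "S = mat_support M" and "T = mat_support N"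
  define U where "U = mat_support (M ** N) \<union> (\<lambda>(s, t). s + t) ` (S \<times> T)"
  have fin: "finite S" "finite T" "finite U"
    using assms laurent_mat_mult[OF assms]
    by (simp_all add: S_def T_def U_def laurent_mat_iff_finite_mat_support)
  have inner: "(\<Sum>t\<in>U. coeff_mat N (t - k) *v c (i - t)) = lca N c (i - k)" if "k \<in> S" for k
  proof -
    have "(\<Sum>t\<in>U. coeff_mat N (t - k) *v c (i - t)) =
        (\<Sum>m\<in>(\<lambda>t. t - k) ` U. coeff_mat N m *v c (i - k - m))"
      by (subst sum.reindex) (auto simp: inj_on_def)
    also have "\<dots> = lca N c (i - k)"
    proof (rule lca_eq_sum[symmetric])
      show "mat_support N \<subseteq> (\<lambda>t. t - k) ` U"
        using that by (force simp: T_def U_def image_iff)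
    qed (use fin in simp)
    finally show ?thesis .
  qed
  have "lca (M ** N) c i = (\<Sum>t\<in>U. (\<Sum>k\<in>S. coeff_mat M k ** coeff_mat N (t - k)) *v c (i - t))"
    using fin by (simp add: lca_eq_sum[of U] coeff_mat_mult[of S] U_def S_def)
  also have "\<dots> = (\<Sum>k\<in>S. coeff_mat M k *v (\<Sum>t\<in>U. coeff_mat N (t - k) *v c (i - t)))"
    by (simp add: sum_matrix_vector_mult matrix_vector_mult_sum matrix_vector_mul_assoc sum.swap[of _ U])
  also have "\<dots> = lca M (lca N c) i"
    by (simp add: inner lca_def S_def)
  finally show "lca (M ** N) c i = lca M (lca N c) i" .
qed

lemma lca_diff: "lca M (x - y) = lca M x - lca M y"
  unfolding lca_def by (simp add: fun_eq_iff matrix_vector_mult_diff_distrib sum_subtractf)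

lemma lca_zero: "lca M 0 = 0"
  using lca_diff[of M 0 0] by simp

lemma lca_nonzero_imp_nearby_nonzero:
  assumes "mat_support M \<subseteq> {-int K..int K}" and "lca M y j \<noteq> 0"
  shows "\<exists>k. \<bar>k\<bar> \<le> int K \<and> y (j - k) \<noteq> 0"
proof -
  obtain k where "k \<in> mat_support M" "coeff_mat M k *v y (j - k) \<noteq> 0"
    using assms(2) unfolding lca_def by (meson sum.neutral)
  moreover from this(1) have "\<bar>k\<bar> \<le> int K" using assms(1) by (auto simp: abs_le_iff)
  ultimately show ?thesis by (metis matrix_vector_mult_0_right)
qed

lemma annihilated_sequence_eq_0:
  fixes \<delta> x :: "int \<Rightarrow> 'a::idom"
  assumes "\<delta> \<noteq> 0" and supp: "{k. \<delta> k \<noteq> 0} \<subseteq> {-int K..int K}"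
    and annihilated: "\<And>i. (\<Sum>k\<in>{-int K..int K}. \<delta> k * x (i - k)) = 0"
    and window: "\<And>j. \<bar>j\<bar> \<le> 2 * int K \<Longrightarrow> x j = 0"
  shows "x = 0"
proof -
  define Z where "Z = {k. \<delta> k \<noteq> 0}"
  have Z: "finite Z" "Z \<noteq> {}" "Z \<subseteq> {-int K..int K}"
    using assms(1) supp finite_subset by (auto simp: Z_def)
  have "x j = 0" for j
  proof (induction "nat \<bar>j\<bar>" arbitrary: j rule: less_induct)
    case less
    show ?case
    proof (cases "\<bar>j\<bar> \<le> 2 * int K")
      case False
      \<comment> \<open>Solve the equation at j + k0 for x j; all other terms lie strictly closer to 0.\<close>
      define k0 where "k0 = (if j > 0 then Min Z else Max Z)"
      have "k0 \<in> Z" using Z by (simp add: k0_def)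
      have vanish: "x (j + k0 - k) = 0" if "k \<in> Z" "k \<noteq> k0" for k
      proof (rule less)
        have "\<bar>k\<bar> \<le> int K" "\<bar>k0\<bar> \<le> int K"
          using that(1) \<open>k0 \<in> Z\<close> Z(3) by (auto simp: abs_le_iff subset_iff)
        moreover have "k0 \<le> k" if "j > 0"
          using Min_le[OF Z(1) \<open>k \<in> Z\<close>] that by (simp add: k0_def)
        moreover have "k \<le> k0" if "\<not> j > 0"
          using Max_ge[OF Z(1) \<open>k \<in> Z\<close>] that by (simp add: k0_def)
        ultimately have "\<bar>j + k0 - k\<bar> < \<bar>j\<bar>"
          using False \<open>k \<noteq> k0\<close> by arith
        then show "nat \<bar>j + k0 - k\<bar> < nat \<bar>j\<bar>" by simp
      qed
      have "(\<Sum>k\<in>{-int K..int K}. \<delta> k * x (j + k0 - k)) = (\<Sum>k\<in>{k0}. \<delta> k * x (j + k0 - k))"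
        by (rule sum.mono_neutral_right) (use \<open>k0 \<in> Z\<close> Z vanish in \<open>auto simp: Z_def\<close>)
      with annihilated[of "j + k0"] \<open>k0 \<in> Z\<close> show "x j = 0" by (simp add: Z_def)
    qed (rule window)
  qed
  then show ?thesis by auto
qed

lemma lca_scalar_mat_eq_0:
  fixes d :: "'a::idom fls" and c :: "int \<Rightarrow> 'a^'n"
  assumes "d \<noteq> 0" and supp: "{k. fls_nth d k \<noteq> 0} \<subseteq> {-int K..int K}"
    and "lca (mat d) c = 0" and window: "\<And>j. \<bar>j\<bar> \<le> 2 * int K \<Longrightarrow> c j = 0"
  shows "c = 0"
proof -
  have "mat_support (mat d :: 'a fls^'n^'n) \<subseteq> {-int K..int K}"
  proof
    fix k assume "k \<in> mat_support (mat d :: 'a fls^'n^'n)"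
    then have "fls_nth d k \<noteq> 0" by (auto simp: mat_support_def mat_def split: if_splits)
    then show "k \<in> {-int K..int K}" using supp by blast
  qed
  then have "lca (mat d) c i = (\<Sum>k\<in>{-int K..int K}. coeff_mat (mat d) k *v c (i - k))" for i
    by (intro lca_eq_sum) simp_all
  moreover have "(coeff_mat (mat d) k *v v) $ a = fls_nth d k * v $ a" for k and v :: "'a^'n" and a
    by (simp add: coeff_mat_def mat_def matrix_vector_mult_def if_distrib[of "\<lambda>f. fls_nth f _"]
        if_distrib[of "\<lambda>y. y * _"] cong: if_cong)
  ultimately have "lca (mat d) c i $ a = (\<Sum>k\<in>{-int K..int K}. fls_nth d k * c (i - k) $ a)" for i a
    by (simp add: sum_component)
  moreover have "fls_nth d \<noteq> 0"
    using \<open>d \<noteq> 0\<close> by (metis fls_nonzero_nth zero_fun_def)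
  ultimately have "(\<lambda>j. c j $ a) = 0" for a
    using assms(3) supp window
    by (intro annihilated_sequence_eq_0[of "fls_nth d" K]) (auto simp: fun_eq_iff)
  then show ?thesis by (auto simp: fun_eq_iff vec_eq_iff)
qed

section \<open>Expansiveness on a window\<close>

lemma half_pow_le_cdist_iff:
  "(1/2) ^ r \<le> cdist x y \<longleftrightarrow> (\<exists>j. \<bar>j\<bar> \<le> int r \<and> x j \<noteq> y j)"
proof (cases "x = y")
  case False
  define m where "m = (LEAST m::nat. \<exists>j. nat \<bar>j\<bar> = m \<and> x j \<noteq> y j)"
  have "cdist x y = (1/2) ^ m"
    using False unfolding cdist_def m_def by simp
  then have "(1/2::real) ^ r \<le> cdist x y \<longleftrightarrow> m \<le> r"
    by (simp add: power_decreasing_iff)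
  also have "\<dots> \<longleftrightarrow> (\<exists>j. \<bar>j\<bar> \<le> int r \<and> x j \<noteq> y j)"
  proof
    assume "m \<le> r"
    from False obtain j0 where "x j0 \<noteq> y j0" by blast
    have "\<exists>j. nat \<bar>j\<bar> = m \<and> x j \<noteq> y j"
      unfolding m_def by (rule LeastI_ex) (use \<open>x j0 \<noteq> y j0\<close> in blast)
    with \<open>m \<le> r\<close> show "\<exists>j. \<bar>j\<bar> \<le> int r \<and> x j \<noteq> y j" by (metis int_nat_eq nat_le_iff)
  next
    assume "\<exists>j. \<bar>j\<bar> \<le> int r \<and> x j \<noteq> y j"
    then obtain j where "\<bar>j\<bar> \<le> int r" "x j \<noteq> y j" by blast
    then have "m \<le> nat \<bar>j\<bar>" unfolding m_def by (blast intro: Least_le)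
    with \<open>\<bar>j\<bar> \<le> int r\<close> show "m \<le> r" by linarith
  qed
  finally show ?thesis .
qed (simp add: cdist_def not_le)

definition window_expansive :: "((int \<Rightarrow> 'b::zero) \<Rightarrow> (int \<Rightarrow> 'b)) \<Rightarrow> nat \<Rightarrow> bool" where
  "window_expansive F r \<longleftrightarrow> (\<forall>c. c \<noteq> 0 \<longrightarrow> (\<exists>l j. \<bar>j\<bar> \<le> int r \<and> (F ^^ l) c j \<noteq> 0))"

lemma pos_expansive_iff_window_expansive:
  fixes F :: "(int \<Rightarrow> 'b::ab_group_add) \<Rightarrow> (int \<Rightarrow> 'b)"
  assumes diff: "\<And>x y. F (x - y) = F x - F y"
  shows "pos_expansive F \<longleftrightarrow> (\<exists>r. window_expansive F r)"
proof -
  have "(F ^^ l) (x - y) = (F ^^ l) x - (F ^^ l) y" for l x y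
    by (induction l) (simp_all only: funpow.simps comp_apply id_apply diff)
  then have separates: "(1/2) ^ r \<le> cdist ((F ^^ l) x) ((F ^^ l) y) \<longleftrightarrow>
      (\<exists>j. \<bar>j\<bar> \<le> int r \<and> (F ^^ l) (x - y) j \<noteq> 0)" for r l x y
    by (simp add: half_pow_le_cdist_iff)
  show ?thesis
  proof
    assume "pos_expansive F"
    then obtain \<epsilon> :: real where "\<epsilon> > 0"
      and \<epsilon>: "\<And>c c'. c \<noteq> c' \<Longrightarrow> \<exists>l. \<epsilon> \<le> cdist ((F ^^ l) c) ((F ^^ l) c')"
      unfolding pos_expansive_def by blast
    obtain r where "(1/2::real) ^ r < \<epsilon>"
      using real_arch_pow_inv[OF \<open>\<epsilon> > 0\<close>, of "1/2"] by auto
    have "window_expansive F r"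
      unfolding window_expansive_def
    proof (intro allI impI)
      fix c :: "int \<Rightarrow> 'b" assume "c \<noteq> 0"
      then obtain l where "\<epsilon> \<le> cdist ((F ^^ l) c) ((F ^^ l) 0)" using \<epsilon> by blast
      with \<open>(1/2) ^ r < \<epsilon>\<close> have "(1/2) ^ r \<le> cdist ((F ^^ l) c) ((F ^^ l) 0)" by linarith
      then show "\<exists>l j. \<bar>j\<bar> \<le> int r \<and> (F ^^ l) c j \<noteq> 0"
        unfolding separates by auto
    qed
    then show "\<exists>r. window_expansive F r" ..
  next
    assume "\<exists>r. window_expansive F r"
    then obtain r where "window_expansive F r" ..
    then have "\<exists>l. (1/2) ^ r \<le> cdist ((F ^^ l) c) ((F ^^ l) c')" if "c \<noteq> c'" for c c'
      using that unfolding window_expansive_def separates by (meson eq_iff_diff_eq_0)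
    then show "pos_expansive F"
      unfolding pos_expansive_def by (intro exI[of _ "(1/2::real) ^ r"]) auto
  qed
qed

lemma window_expansive_transfer:
  fixes F :: "(int \<Rightarrow> 'b::zero) \<Rightarrow> (int \<Rightarrow> 'b)" and G :: "(int \<Rightarrow> 'c::zero) \<Rightarrow> (int \<Rightarrow> 'c)"
  assumes F: "window_expansive F r"
    and semiconj: "\<And>c. F (\<Phi> c) = \<Phi> (G c)"
    and local: "\<And>y j. \<Phi> y j \<noteq> 0 \<Longrightarrow> \<exists>k. \<bar>k\<bar> \<le> int K \<and> y (j - k) \<noteq> 0"
    and kernel: "\<And>c. \<Phi> c = 0 \<Longrightarrow> (\<And>j. \<bar>j\<bar> \<le> int W \<Longrightarrow> c j = 0) \<Longrightarrow> c = 0"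
  shows "window_expansive G (max (r + K) W)"
  unfolding window_expansive_def
proof (intro allI impI)
  fix c :: "int \<Rightarrow> 'c" assume "c \<noteq> 0"
  have iter: "(F ^^ l) (\<Phi> c) = \<Phi> ((G ^^ l) c)" for l
    by (induction l) (simp_all add: semiconj)
  show "\<exists>l j. \<bar>j\<bar> \<le> int (max (r + K) W) \<and> (G ^^ l) c j \<noteq> 0"
  proof (cases "\<Phi> c = 0")
    case True
    with kernel \<open>c \<noteq> 0\<close> obtain j where "\<bar>j\<bar> \<le> int W" "c j \<noteq> 0" by blast
    then show ?thesis by (intro exI[of _ 0] exI[of _ j]) auto
  next
    case False
    with F obtain l j where "\<bar>j\<bar> \<le> int r" "(F ^^ l) (\<Phi> c) j \<noteq> 0"
      unfolding window_expansive_def by blast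
    then have "\<bar>j\<bar> \<le> int r" "\<Phi> ((G ^^ l) c) j \<noteq> 0" by (simp_all add: iter)
    moreover from local[OF this(2)] obtain k where "\<bar>k\<bar> \<le> int K" "(G ^^ l) c (j - k) \<noteq> 0"
      by blast
    ultimately show ?thesis by (intro exI[of _ l] exI[of _ "j - k"]) auto
  qed
qed

lemma window_expansive_lca_transfer:
  fixes A B Q R :: "'a::idom fls^'n^'n"
  assumes "laurent_mat A" "laurent_mat B" "laurent_mat Q" "laurent_mat R"
    and "A ** Q = Q ** B" and "R ** Q = mat d" and "d \<noteq> 0"
    and "window_expansive (lca A) r"
  shows "\<exists>r'. window_expansive (lca B) r'"
proof -
  obtain KQ where KQ: "mat_support Q \<subseteq> {-int KQ..int KQ}"
    using assms(3) finite_int_set_subset_interval laurent_mat_iff_finite_mat_support by blast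
  have "laurent_poly d"
    using laurent_mat_mult[OF assms(4,3)] assms(6) by (simp add: laurent_mat_scalar_iff)
  then have "finite {k. fls_nth d k \<noteq> 0}"
    by (simp add: laurent_poly_def)
  then obtain Kd where Kd: "{k. fls_nth d k \<noteq> 0} \<subseteq> {-int Kd..int Kd}"
    using finite_int_set_subset_interval by blast
  have "window_expansive (lca B) (max (r + KQ) (2 * Kd))"
  proof (rule window_expansive_transfer[OF assms(8)])
    show "lca A (lca Q c) = lca Q (lca B c)" for c
      using lca_mult[OF assms(1,3), of c] lca_mult[OF assms(3,2), of c] assms(5) by simp
    show "\<exists>k. \<bar>k\<bar> \<le> int KQ \<and> y (j - k) \<noteq> 0" if "lca Q y j \<noteq> 0" for y j
      using KQ that by (rule lca_nonzero_imp_nearby_nonzero)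
    show "c = 0" if "lca Q c = 0" and window: "\<And>j. \<bar>j\<bar> \<le> int (2 * Kd) \<Longrightarrow> c j = 0" for c
    proof (rule lca_scalar_mat_eq_0[OF assms(7) Kd])
      show "lca (mat d) c = 0"
        using lca_mult[OF assms(4,3)] assms(6) that(1) by (simp add: lca_zero)
    next
      fix j :: int assume "\<bar>j\<bar> \<le> 2 * int Kd"
      then show "c j = 0" using window[of j] by simp
    qed
  qed
  then show ?thesis ..
qed

section \<open>The adjugate\<close>

lemma scalar_mat_mult_eq: "mat a ** M = (\<chi> i j. a * M $ i $ j)"
  by (simp add: vec_eq_iff matrix_matrix_mult_def mat_def if_distrib[of "\<lambda>x. x * _"] cong: if_cong)

lemma mult_scalar_mat_eq: "M ** mat a = (\<chi> i j. M $ i $ j * a)"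
  by (simp add: vec_eq_iff matrix_matrix_mult_def mat_def if_distrib cong: if_cong)

lemma scalar_mat_commute: "mat a ** M = M ** (mat a :: 'a::comm_semiring_1^'n^'n)"
  by (simp add: scalar_mat_mult_eq mult_scalar_mat_eq mult.commute)

lemma intertwining_inverse:
  fixes Q Q' :: "'a::semiring_1^'n^'n"
  assumes "Q ** Q' = mat 1" and "Q' ** Q = mat 1" and "A ** Q = Q ** B"
  shows "B ** Q' = Q' ** A"
proof -
  have "B ** Q' = Q' ** Q ** B ** Q'"
    by (simp add: assms(2))
  also have "\<dots> = Q' ** A ** Q ** Q'"
    by (metis assms(3) matrix_mul_assoc)
  also have "\<dots> = Q' ** A"
    by (simp add: assms(1) matrix_mul_assoc[symmetric])
  finally show ?thesis .
qed

lemma laurent_adjugate: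
  fixes A B Q :: "'a::field fls^'n^'n"
  assumes "laurent_mat Q" and "det Q \<noteq> 0" and "A ** Q = Q ** B"
  obtains R where "laurent_mat R" and "R ** Q = mat (det Q)" and "Q ** R = mat (det Q)"
    and "B ** R = R ** A"
proof -
  obtain Q' where Q': "Q ** Q' = mat 1" "Q' ** Q = mat 1"
    using assms(2) unfolding invertible_det_nz[symmetric] invertible_def by blast
  define R where "R = mat (det Q) ** Q'"
  have cramer: "R $ k $ j = det (\<chi> i l. if l = k then axis j 1 $ i else Q $ i $ l)" for k j
  proof -
    have "Q *v (Q' *v axis j 1) = axis j 1"
      by (simp add: matrix_vector_mul_assoc Q'(1))
    then have "det (\<chi> i l. if l = k then axis j 1 $ i else Q $ i $ l) = (Q' *v axis j 1) $ k * det Q"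
      using cramer_lemma[of k Q "Q' *v axis j 1"] by (simp only:)
    moreover have "(Q' *v axis j 1) $ k = Q' $ k $ j"
      by (simp add: matrix_vector_mult_def axis_def if_distrib[of "\<lambda>x. _ * x"] cong: if_cong)
    ultimately show ?thesis
      by (simp add: R_def scalar_mat_mult_eq mult.commute)
  qed
  have "laurent_poly (1 :: 'a fls)"
    using laurent_poly_of_int[of 1] by simp
  then have "laurent_mat R"
    using assms(1) unfolding laurent_mat_def cramer
    by (auto intro!: laurent_poly_det simp: laurent_mat_def axis_def laurent_poly_0)
  moreover have "R ** Q = mat (det Q)"
    by (simp add: R_def matrix_mul_assoc[symmetric] Q'(2))
  moreover have "Q ** R = mat (det Q)"
    unfolding R_def matrix_mul_assoc scalar_mat_commute[where M = Q, symmetric]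
    by (simp add: matrix_mul_assoc[symmetric] Q'(1))
  moreover have "B ** R = R ** A"
    unfolding R_def matrix_mul_assoc scalar_mat_commute[where M = B, symmetric]
    by (simp add: matrix_mul_assoc[symmetric] intertwining_inverse[OF Q' assms(3)])
  ultimately show ?thesis by (rule that)
qed

theorem lemma8:
  fixes A B Q :: "'p::prime_card mod_ring fls ^'n ^'n"
  assumes "laurent_mat A" and "laurent_mat B" and "laurent_mat Q"
    and "det Q \<noteq> 0"
    and "A ** Q = Q ** B"
  shows "pos_expansive (lca A) \<longleftrightarrow> pos_expansive (lca B)"
proof -
  obtain R where R: "laurent_mat R" "R ** Q = mat (det Q)" "Q ** R = mat (det Q)" "B ** R = R ** A"
    using laurent_adjugate[OF assms(3-5)] by blast
  have "(\<exists>r. window_expansive (lca A) r) \<longleftrightarrow> (\<exists>r. window_expansive (lca B) r)"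
    using window_expansive_lca_transfer[OF assms(1-3) R(1) assms(5) R(2) assms(4)]
      window_expansive_lca_transfer[OF assms(2,1) R(1) assms(3) R(4,3) assms(4)]
    by blast
  then show ?thesis
    by (simp add: pos_expansive_iff_window_expansive lca_diff)
qed

end
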